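(* Let $a>0$, $b>0$ and consider the equation $u_t+ax^2u_{xx}+bx^3u_{xx}^2=0$ for $t>0$, $x>0$. Let $c_1,c_2$ be arbitrary real constants and $\varepsilon,\delta\in\{1,-1\}$. Each of the following functions is an exact solution: (1) $u=c_1+\frac{a}{2b}x\left(c_2+\frac a2t-\log x\right)$; (2) $u=c_1-t+4\delta\sqrt{\frac xb}+\frac{a}{2b}x\left(c_2+\frac a2t-\log x\right)$; (3) $u=c_1+\frac{a+2\varepsilon}{2b}x\left(c_2+\frac{a-2\varepsilon}{2}t-\log x\right)$; (4) $u=\varepsilon c_1^2e^{-\varepsilon t}+4\delta c_1e^{-\frac{\varepsilon}{2}t}\sqrt{\frac xb}+\frac{a+2\varepsilon}{2b}x\left(c_2+\frac{a-2\varepsilon}{2}t-\log x\right)$; (5) $u=\frac xb\left[c_1+\left(\varepsilon+\frac{a^2}{4}\right)t-\frac a2\log x+\frac{1}{2k}\left(\delta\sqrt{1-4\varepsilon k^2}-1\right)\left(\frac1k t+\log x\right)\right]$, where $k\neq0$ if $\varepsilon=-1$, and $0<|k|\le\frac12$ if $\varepsilon=1$.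
   Context: This is the non-linear Black--Scholes equation $u_t+ax^2u_{xx}+bx^3u_{xx}^2+c(xu_x-u)=0$ with $c=0$; $\log$ denotes the natural logarithm. *)

theory Defs
  imports "HOL-Analysis.Analysis"
begin

definition BS_solution :: "real \<Rightarrow> real \<Rightarrow> (real \<Rightarrow> real \<Rightarrow> real) \<Rightarrow> bool" where
  "BS_solution a b u \<longleftrightarrow>
     (\<forall>t>0. \<forall>x>0.
        (\<lambda>s. u s x) differentiable (at t) \<and>
        (\<lambda>y. u t y) differentiable (at x) \<and>
        deriv (\<lambda>y. u t y) differentiable (at x) \<and>
        deriv (\<lambda>s. u s x) t + a * x\<^sup>2 * deriv (deriv (\<lambda>y. u t y)) x
          + b * x ^ 3 * (deriv (deriv (\<lambda>y. u t y)) x)\<^sup>2 = 0)"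

end

theory Submission
  imports Defs "HOL-Library.Quadratic_Discriminant"
begin

text \<open>All five families come from two separable ansatzes.
  For \<open>u = p(t) + q(t) \<surd>(x/b) + B x (c + C t - log x)\<close> one has
  \<open>u\<^sub>x\<^sub>x = -q/(4 x \<surd>(bx)) - B/x\<close>, so the equation splits along the powers
  \<open>1, \<surd>x, x\<close> into \<open>p' = -q\<^sup>2/16\<close>, \<open>q' = (a/4 - bB/2) q\<close> and \<open>B (C - a + bB) = 0\<close>;
  families (1)--(4) solve these ODEs.
  For \<open>u = x (\<alpha> + \<beta> t + \<gamma> log x)\<close> the equation reduces to \<open>\<beta> + a\<gamma> + b\<gamma>\<^sup>2 = 0\<close>;
  in family (5) this is the quadratic \<open>k K\<^sup>2 + K + \<epsilon> k = 0\<close> for the coefficient \<open>K\<close> of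
  \<open>t/k + log x\<close>, whose roots are \<open>K = (\<delta> \<surd>(1 - 4\<epsilon>k\<^sup>2) - 1)/(2k)\<close>.\<close>

lemma BS_solutionI:
  assumes ut: "\<And>t x. t > 0 \<Longrightarrow> x > 0 \<Longrightarrow> ((\<lambda>s. u s x) has_real_derivative Ut t x) (at t)"
    and ux: "\<And>t x. t > 0 \<Longrightarrow> x > 0 \<Longrightarrow> ((\<lambda>y. u t y) has_real_derivative Ux t x) (at x)"
    and uxx: "\<And>t x. t > 0 \<Longrightarrow> x > 0 \<Longrightarrow> ((\<lambda>y. Ux t y) has_real_derivative Uxx t x) (at x)"
    and eq: "\<And>t x. t > 0 \<Longrightarrow> x > 0 \<Longrightarrow> Ut t x + a * x\<^sup>2 * Uxx t x + b * x ^ 3 * (Uxx t x)\<^sup>2 = 0"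
  shows "BS_solution a b u"
  unfolding BS_solution_def
proof (intro allI impI)
  fix t x :: real
  assume t: "t > 0" and x: "x > 0"
  have deriv_ux: "deriv (\<lambda>y. u t y) y = Ux t y" if "y \<in> {0<..}" for y
    using ux[OF t] that by (intro DERIV_imp_deriv) auto
  have uxx': "(deriv (\<lambda>y. u t y) has_real_derivative Uxx t x) (at x)"
    by (rule has_field_derivative_transform_within_open[OF uxx[OF t x], of "{0<..}"])
       (use x deriv_ux in auto)
  have "deriv (\<lambda>s. u s x) t = Ut t x"
    using ut[OF t x] by (rule DERIV_imp_deriv)
  moreover have "deriv (deriv (\<lambda>y. u t y)) x = Uxx t x"
    using uxx' by (rule DERIV_imp_deriv)
  ultimately show "(\<lambda>s. u s x) differentiable (at t) \<and>
        (\<lambda>y. u t y) differentiable (at x) \<and>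
        deriv (\<lambda>y. u t y) differentiable (at x) \<and>
        deriv (\<lambda>s. u s x) t + a * x\<^sup>2 * deriv (deriv (\<lambda>y. u t y)) x
          + b * x ^ 3 * (deriv (deriv (\<lambda>y. u t y)) x)\<^sup>2 = 0"
    using ut[OF t x] ux[OF t x] uxx' eq[OF t x] by (auto simp: real_differentiable_def)
qed

lemma has_real_derivative_sqrt_divide:
  assumes "x > 0" "b > 0"
  shows "((\<lambda>y. sqrt (y / b)) has_real_derivative 1 / (2 * b * sqrt (x / b))) (at x)"
proof -
  have "(sqrt has_real_derivative inverse (sqrt (x / b)) / 2) (at (x / b))"
    using assms by (intro DERIV_real_sqrt) simp
  from DERIV_chain2[OF this DERIV_cdivide[OF DERIV_ident, of b]] show ?thesis
    by (simp add: field_simps)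
qed

lemma BS_solution_sqrt_log_ansatz:
  assumes "b > 0" and coeff: "B * (C - a + b * B) = 0"
    and dp: "\<And>t. (p has_real_derivative - (q t)\<^sup>2 / 16) (at t)"
    and dq: "\<And>t. (q has_real_derivative (a / 4 - b * B / 2) * q t) (at t)"
  shows "BS_solution a b (\<lambda>t x. p t + q t * sqrt (x / b) + B * x * (c + C * t - ln x))"
proof (rule BS_solutionI[where
      Ut = "\<lambda>t x. - (q t)\<^sup>2 / 16 + (a / 4 - b * B / 2) * q t * sqrt (x / b) + B * x * C" and
      Ux = "\<lambda>t x. q t / (2 * b * sqrt (x / b)) + B * (c + C * t - ln x) - B" and
      Uxx = "\<lambda>t x. - q t / (4 * x * b * sqrt (x / b)) - B / x"])
  fix t x :: real
  assume "t > 0" "x > 0"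
  then show "((\<lambda>s. p s + q s * sqrt (x / b) + B * x * (c + C * s - ln x)) has_real_derivative
      - (q t)\<^sup>2 / 16 + (a / 4 - b * B / 2) * q t * sqrt (x / b) + B * x * C) (at t)"
    by (auto intro!: derivative_eq_intros dp dq)
  show "((\<lambda>y. p t + q t * sqrt (y / b) + B * y * (c + C * t - ln y)) has_real_derivative
      q t / (2 * b * sqrt (x / b)) + B * (c + C * t - ln x) - B) (at x)"
    using \<open>x > 0\<close> \<open>b > 0\<close>
    by (auto intro!: derivative_eq_intros has_real_derivative_sqrt_divide simp: field_simps)
  show "((\<lambda>y. q t / (2 * b * sqrt (y / b)) + B * (c + C * t - ln y) - B) has_real_derivative
      - q t / (4 * x * b * sqrt (x / b)) - B / x) (at x)"
    using \<open>x > 0\<close> \<open>b > 0\<close>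
    by (auto intro!: derivative_eq_intros has_real_derivative_sqrt_divide
        simp: field_simps power2_eq_square)
  define s where "s = sqrt (x / b)"
  have "s > 0" and x: "x = b * s\<^sup>2"
    using \<open>x > 0\<close> \<open>b > 0\<close> by (simp_all add: s_def)
  have "- (q t)\<^sup>2 / 16 + (a / 4 - b * B / 2) * q t * s + B * x * C
      + a * x\<^sup>2 * (- q t / (4 * x * b * s) - B / x)
      + b * x ^ 3 * (- q t / (4 * x * b * s) - B / x)\<^sup>2 = B * (C - a + b * B) * x"
    using \<open>s > 0\<close> \<open>b > 0\<close> unfolding x
    by (simp add: field_simps power2_eq_square power3_eq_cube)
  then show "- (q t)\<^sup>2 / 16 + (a / 4 - b * B / 2) * q t * sqrt (x / b) + B * x * C
      + a * x\<^sup>2 * (- q t / (4 * x * b * sqrt (x / b)) - B / x)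
      + b * x ^ 3 * (- q t / (4 * x * b * sqrt (x / b)) - B / x)\<^sup>2 = 0"
    using coeff by (simp add: s_def)
qed

lemma BS_solution_linear_log_ansatz:
  assumes "\<beta> + a * \<gamma> + b * \<gamma>\<^sup>2 = 0"
  shows "BS_solution a b (\<lambda>t x. x * (\<alpha> + \<beta> * t + \<gamma> * ln x))"
proof (rule BS_solutionI[where Ut = "\<lambda>t x. x * \<beta>" and
      Ux = "\<lambda>t x. \<alpha> + \<beta> * t + \<gamma> * ln x + \<gamma>" and Uxx = "\<lambda>t x. \<gamma> / x"])
  fix t x :: real
  assume "x > 0"
  then show "((\<lambda>s. x * (\<alpha> + \<beta> * s + \<gamma> * ln x)) has_real_derivative x * \<beta>) (at t)"
    and "((\<lambda>y. y * (\<alpha> + \<beta> * t + \<gamma> * ln y)) has_real_derivative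
        \<alpha> + \<beta> * t + \<gamma> * ln x + \<gamma>) (at x)"
    and "((\<lambda>y. \<alpha> + \<beta> * t + \<gamma> * ln y + \<gamma>) has_real_derivative \<gamma> / x) (at x)"
    by (auto intro!: derivative_eq_intros simp: field_simps)
  have "x * \<beta> + a * x\<^sup>2 * (\<gamma> / x) + b * x ^ 3 * (\<gamma> / x)\<^sup>2 = x * (\<beta> + a * \<gamma> + b * \<gamma>\<^sup>2)"
    using \<open>x > 0\<close> by (simp add: field_simps power2_eq_square power3_eq_cube)
  then show "x * \<beta> + a * x\<^sup>2 * (\<gamma> / x) + b * x ^ 3 * (\<gamma> / x)\<^sup>2 = 0"
    using assms by simp
qed

lemma BS_solution_log_family:
  assumes "b > 0" and "B * (C - a + b * B) = 0"
  shows "BS_solution a b (\<lambda>t x. c + B * x * (d + C * t - ln x))"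
  using BS_solution_sqrt_log_ansatz[of b B C a "\<lambda>_. c" "\<lambda>_. 0" d] assms
  by simp

lemma BS_solution_sqrt_log_linear_time:
  assumes "b > 0" and "\<delta> \<in> {1, -1}"
  shows "BS_solution a b (\<lambda>t x. c - t + 4 * \<delta> * sqrt (x / b)
                               + a / (2*b) * x * (d + a/2 * t - ln x))"
proof (rule BS_solution_sqrt_log_ansatz)
  show "a / (2*b) * (a/2 - a + b * (a / (2*b))) = 0"
    and "((\<lambda>_. 4 * \<delta>) has_real_derivative (a / 4 - b * (a / (2*b)) / 2) * (4 * \<delta>)) (at t)"
    for t using \<open>b > 0\<close> by simp_all
  show "((\<lambda>t. c - t) has_real_derivative - (4 * \<delta>)\<^sup>2 / 16) (at t)" for t
    using \<open>\<delta> \<in> {1, -1}\<close> by (auto intro!: derivative_eq_intros)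
qed fact

lemma BS_solution_sqrt_log_exp_time:
  assumes "b > 0" and "\<epsilon> \<in> {1, -1}" and "\<delta> \<in> {1, -1}"
  shows "BS_solution a b (\<lambda>t x. \<epsilon> * c\<^sup>2 * exp (- \<epsilon> * t)
                               + 4 * \<delta> * c * exp (- (\<epsilon>/2) * t) * sqrt (x / b)
                               + (a + 2*\<epsilon>) / (2*b) * x * (d + (a - 2*\<epsilon>)/2 * t - ln x))"
proof (rule BS_solution_sqrt_log_ansatz)
  show "(a + 2*\<epsilon>) / (2*b) * ((a - 2*\<epsilon>)/2 - a + b * ((a + 2*\<epsilon>) / (2*b))) = 0"
    using \<open>b > 0\<close> by (simp add: field_simps)
  show "((\<lambda>t. 4 * \<delta> * c * exp (- (\<epsilon>/2) * t)) has_real_derivative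
      (a / 4 - b * ((a + 2*\<epsilon>) / (2*b)) / 2) * (4 * \<delta> * c * exp (- (\<epsilon>/2) * t))) (at t)" for t
    using \<open>b > 0\<close> by (auto intro!: derivative_eq_intros simp: field_simps)
  have "(exp (- (\<epsilon>/2) * t))\<^sup>2 = exp (- \<epsilon> * t)" for t
    by (simp flip: exp_double)
  then show "((\<lambda>t. \<epsilon> * c\<^sup>2 * exp (- \<epsilon> * t)) has_real_derivative
      - (4 * \<delta> * c * exp (- (\<epsilon>/2) * t))\<^sup>2 / 16) (at t)" for t
    using assms(2,3) by (auto intro!: derivative_eq_intros simp: power_mult_distrib)
qed fact

lemma BS_solution_linear_log_quadratic_root:
  assumes "b > 0" and "k \<noteq> 0" and "1 - 4*\<epsilon>*k\<^sup>2 \<ge> 0" and "\<delta> \<in> {1, -1}"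
  shows "BS_solution a b (\<lambda>t x. x / b * (c + (\<epsilon> + a\<^sup>2/4) * t - a/2 * ln x
                + 1/(2*k) * (\<delta> * sqrt (1 - 4*\<epsilon>*k\<^sup>2) - 1) * (1/k * t + ln x)))"
proof -
  define K where "K = 1/(2*k) * (\<delta> * sqrt (1 - 4*\<epsilon>*k\<^sup>2) - 1)"
  have "discrim k 1 (\<epsilon> * k) = 1 - 4*\<epsilon>*k\<^sup>2"
    by (simp add: discrim_def power2_eq_square)
  then have "k * K\<^sup>2 + 1 * K + \<epsilon> * k = 0"
    using discriminant_nonneg[of k 1 "\<epsilon> * k" K] assms(2-4) by (auto simp: K_def)
  moreover have "(\<epsilon> + a\<^sup>2/4 + K/k) / b + a * ((K - a/2) / b) + b * ((K - a/2) / b)\<^sup>2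
      = (k * K\<^sup>2 + 1 * K + \<epsilon> * k) / (b * k)"
    using assms(1,2) by (simp add: field_simps power2_eq_square)
  ultimately have coeff: "(\<epsilon> + a\<^sup>2/4 + K/k) / b + a * ((K - a/2) / b) + b * ((K - a/2) / b)\<^sup>2 = 0"
    by simp
  have "(\<lambda>t x. x * (c / b + (\<epsilon> + a\<^sup>2/4 + K/k) / b * t + (K - a/2) / b * ln x)) =
      (\<lambda>t x. x / b * (c + (\<epsilon> + a\<^sup>2/4) * t - a/2 * ln x + K * (1/k * t + ln x)))"
    using assms(1,2) by (intro ext) (simp add: field_simps)
  with BS_solution_linear_log_ansatz[OF coeff, of "c / b"] show ?thesis
    unfolding K_def[symmetric] by simp
qed

theorem mainTheorem5:
  fixes a b c1 c2 \<epsilon> \<delta> k :: real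
  assumes "a > 0" and "b > 0"
    and "\<epsilon> \<in> {1, -1}" and "\<delta> \<in> {1, -1}"
  shows "BS_solution a b (\<lambda>t x. c1 + a / (2*b) * x * (c2 + a/2 * t - ln x)) \<and>
        BS_solution a b (\<lambda>t x. c1 - t + 4 * \<delta> * sqrt (x / b)
                               + a / (2*b) * x * (c2 + a/2 * t - ln x)) \<and>
        BS_solution a b (\<lambda>t x. c1 + (a + 2*\<epsilon>) / (2*b) * x * (c2 + (a - 2*\<epsilon>)/2 * t - ln x)) \<and>
        BS_solution a b (\<lambda>t x. \<epsilon> * c1\<^sup>2 * exp (- \<epsilon> * t)
                               + 4 * \<delta> * c1 * exp (- (\<epsilon>/2) * t) * sqrt (x / b)
                               + (a + 2*\<epsilon>) / (2*b) * x * (c2 + (a - 2*\<epsilon>)/2 * t - ln x)) \<and>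
         ((\<epsilon> = -1 \<and> k \<noteq> 0) \<or> (\<epsilon> = 1 \<and> 0 < \<bar>k\<bar> \<and> \<bar>k\<bar> \<le> 1/2) \<longrightarrow>
         BS_solution a b (\<lambda>t x. x / b * (c1 + (\<epsilon> + a\<^sup>2/4) * t - a/2 * ln x
                + 1/(2*k) * (\<delta> * sqrt (1 - 4*\<epsilon>*k\<^sup>2) - 1) * (1/k * t + ln x))))"
proof -
  have "a / (2*b) * (a/2 - a + b * (a / (2*b))) = 0"
    and "(a + 2*\<epsilon>) / (2*b) * ((a - 2*\<epsilon>)/2 - a + b * ((a + 2*\<epsilon>) / (2*b))) = 0"
    using \<open>b > 0\<close> by (simp_all add: field_simps)
  note log_families = this[THEN BS_solution_log_family[OF \<open>b > 0\<close>, where c = c1 and d = c2]]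
  have parameter_range: "k \<noteq> 0 \<and> 1 - 4*\<epsilon>*k\<^sup>2 \<ge> 0"
    if "(\<epsilon> = -1 \<and> k \<noteq> 0) \<or> (\<epsilon> = 1 \<and> 0 < \<bar>k\<bar> \<and> \<bar>k\<bar> \<le> 1/2)"
    using that
  proof (elim disjE conjE)
    assume "\<epsilon> = 1" "0 < \<bar>k\<bar>" "\<bar>k\<bar> \<le> 1/2"
    then show ?thesis
      using abs_le_square_iff[of k "1/2"] by (simp add: power_divide)
  qed (simp add: add_nonneg_nonneg)
  show ?thesis
    using log_families
      BS_solution_sqrt_log_linear_time[OF \<open>b > 0\<close> \<open>\<delta> \<in> {1, -1}\<close>, where c = c1 and d = c2]
      BS_solution_sqrt_log_exp_time[OF \<open>b > 0\<close> \<open>\<epsilon> \<in> {1, -1}\<close> \<open>\<delta> \<in> {1, -1}\<close>,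
        where c = c1 and d = c2]
      BS_solution_linear_log_quadratic_root[OF \<open>b > 0\<close> _ _ \<open>\<delta> \<in> {1, -1}\<close>, where c = c1 and a = a]
      parameter_range
    by blast
qed

end
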